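(* Let $G$ be a countable discrete group. Every $K_\sigma$ subgroup of $G^\omega$ is compactly generated if and only if every subgroup of $G$ is finitely generated.
   Context: $G^\omega$ carries the product topology. A subgroup $H$ of a topological group is compactly generated if $H=\langle K\rangle$ for some compact set $K$; it is $K_\sigma$ if it is a countable union of compact sets. *)

theory Defs
  imports "HOL-Analysis.Analysis" "HOL-Algebra.Product_Groups" "HOL-Algebra.Generated_Groups"
begin

definition omega_power :: "('a, 'b) monoid_scheme \<Rightarrow> (nat \<Rightarrow> 'a) monoid" where
  "omega_power G = product_group (UNIV :: nat set) (\<lambda>_. G)"

definition omega_topology :: "('a, 'b) monoid_scheme \<Rightarrow> (nat \<Rightarrow> 'a) topology" where
  "omega_topology G = product_topology (\<lambda>_. discrete_topology (carrier G)) (UNIV :: nat set)"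

definition Ksigma_in :: "'a topology \<Rightarrow> 'a set \<Rightarrow> bool" where
  "Ksigma_in T H \<longleftrightarrow> (\<exists>\<C>. countable \<C> \<and> (\<forall>C\<in>\<C>. compactin T C) \<and> H = \<Union>\<C>)"

definition compactly_generated_in :: "('a, 'b) monoid_scheme \<Rightarrow> 'a topology \<Rightarrow> 'a set \<Rightarrow> bool" where
  "compactly_generated_in P T H \<longleftrightarrow>
     (\<exists>K. K \<subseteq> carrier P \<and> compactin T K \<and> H = generate P K)"

definition finitely_generated_subgroup :: "('a, 'b) monoid_scheme \<Rightarrow> 'a set \<Rightarrow> bool" where
  "finitely_generated_subgroup G H \<longleftrightarrow> (\<exists>F. finite F \<and> F \<subseteq> H \<and> H = generate G F)"

end

theory Submission
  imports Defs
begin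

(*
  If G^omega has the property, embed a subgroup H of G diagonally: the copy is countable, hence
  K_sigma, hence generated by a compact set, whose finite image in the first coordinate generates H.

  Conversely, write a K_sigma subgroup H as the union of compact sets K_n and let Z_n
  (omega_tail G n) be the subgroup of sequences trivial below n. The n-th coordinates of H \<inter> Z_n
  form a subgroup of G, generated by the n-th coordinates of a finite M_n \<subseteq> H \<inter> Z_n; by induction, every x \<in> H agrees
  below n with some w in the subgroup generated by M_0, ..., M_(n-1). As K_n has only finitely many
  restrictions to {0..<n}, finitely many such w serve all of K_n, and the corrections w^-1 x form a
  compact set L_n \<subseteq> H \<inter> Z_n. Every neighbourhood of 1 contains all but finitely many Z_n, so
  {1} \<union> \<Union>(M_n \<union> L_n) is compact, and it generates H.
*)

lemma compactin_insert_Union_convergent: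
  fixes S :: "nat \<Rightarrow> 'a set"
  assumes x: "x \<in> topspace X" and S: "\<And>n. compactin X (S n)"
    and conv: "\<And>U. openin X U \<Longrightarrow> x \<in> U \<Longrightarrow> \<exists>N. \<forall>n\<ge>N. S n \<subseteq> U"
  shows "compactin X (insert x (\<Union>n. S n))"
  unfolding compactin_def
proof (intro conjI strip)
  show "insert x (\<Union>n. S n) \<subseteq> topspace X"
    using x S[THEN compactin_subset_topspace] by (simp add: UN_least)
  fix \<U> assume \<U>: "Ball \<U> (openin X) \<and> insert x (\<Union>n. S n) \<subseteq> \<Union>\<U>"
  then obtain U where U: "U \<in> \<U>" "x \<in> U" by auto
  obtain N where N: "\<And>n. n \<ge> N \<Longrightarrow> S n \<subseteq> U"
    using conv[of U] U \<U> by auto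
  have "S n \<subseteq> \<Union>\<U>" for n
    using \<U> by blast
  then have "\<exists>\<F>. finite \<F> \<and> \<F> \<subseteq> \<U> \<and> S n \<subseteq> \<Union>\<F>" for n
    using \<U> by (intro compactinD[OF S]) auto
  then obtain \<F> where \<F>: "\<And>n. finite (\<F> n)" "\<And>n. \<F> n \<subseteq> \<U>" "\<And>n. S n \<subseteq> \<Union>(\<F> n)"
    by metis
  define \<F>' where "\<F>' = insert U (\<Union>n<N. \<F> n)"
  have "S n \<subseteq> \<Union>\<F>'" for n
  proof (cases "N \<le> n")
    case True
    then show ?thesis using N[OF True] by (auto simp: \<F>'_def)
  next
    case False
    then have "\<F> n \<subseteq> \<F>'" by (auto simp: \<F>'_def)
    then show ?thesis using \<F>(3)[of n] by (meson Sup_subset_mono order_trans)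
  qed
  moreover have "finite \<F>'" "\<F>' \<subseteq> \<U>"
    using U \<F> by (auto simp: \<F>'_def)
  ultimately show "\<exists>\<F>'. finite \<F>' \<and> \<F>' \<subseteq> \<U> \<and> insert x (\<Union>n. S n) \<subseteq> \<Union>\<F>'"
    using U by (intro exI[of _ \<F>']) (auto simp: \<F>'_def)
qed

lemma Ksigma_in_countable:
  assumes "countable S" "S \<subseteq> topspace X"
  shows "Ksigma_in X S"
  unfolding Ksigma_in_def
  using assms by (intro exI[of _ "(\<lambda>x. {x}) ` S"]) auto

lemma Ksigma_in_imp_compactin_sequence:
  assumes "Ksigma_in X S"
  obtains K :: "nat \<Rightarrow> 'a set" where "\<And>n. compactin X (K n)" "S = (\<Union>n. K n)"
proof -
  obtain \<C> where \<C>: "countable \<C>" "\<And>C. C \<in> \<C> \<Longrightarrow> compactin X C" "S = \<Union>\<C>"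
    using assms unfolding Ksigma_in_def by blast
  show ?thesis
  proof (cases "\<C> = {}")
    case True
    then show ?thesis using \<C>(3) by (intro that[of "\<lambda>_. {}"]) auto
  next
    case False
    then show ?thesis
      using \<C> by (intro that[of "from_nat_into \<C>"]) (auto simp: from_nat_into)
  qed
qed

lemma finitely_generated_subgroup_image_lift:
  assumes "finitely_generated_subgroup G (f ` S)"
  shows "\<exists>M. finite M \<and> M \<subseteq> S \<and> f ` S = generate G (f ` M)"
proof -
  obtain F where F: "finite F" "F \<subseteq> f ` S" "f ` S = generate G F"
    using assms unfolding finitely_generated_subgroup_def by blast
  then obtain M where "M \<subseteq> S" "finite M" "F = f ` M"
    by (meson finite_subset_image)
  then show ?thesis using F(3) by blast
qed

lemma omega_power_carrier: "carrier (omega_power G) = {x. \<forall>i. x i \<in> carrier G}"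
  by (auto simp: omega_power_def PiE_iff)

lemma omega_power_one [simp]: "\<one>\<^bsub>omega_power G\<^esub> = (\<lambda>i. \<one>\<^bsub>G\<^esub>)"
  by (simp add: omega_power_def restrict_UNIV)

lemma omega_power_mult [simp]: "x \<otimes>\<^bsub>omega_power G\<^esub> y = (\<lambda>i. x i \<otimes>\<^bsub>G\<^esub> y i)"
  by (simp add: omega_power_def restrict_UNIV)

lemma group_omega_power: "group G \<Longrightarrow> group (omega_power G)"
  by (simp add: omega_power_def)

lemma omega_power_inv:
  "group G \<Longrightarrow> x \<in> carrier (omega_power G) \<Longrightarrow> inv\<^bsub>omega_power G\<^esub> x = (\<lambda>i. inv\<^bsub>G\<^esub> x i)"
  unfolding omega_power_def by (subst inv_product_group) (auto simp: PiE_iff)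

lemma group_hom_omega_coordinate: "group G \<Longrightarrow> group_hom (omega_power G) G (\<lambda>x. x k)"
  by (intro group_hom.intro group_hom_axioms.intro group_omega_power)
     (auto simp: hom_def omega_power_carrier)

lemma topspace_omega_topology [simp]: "topspace (omega_topology G) = carrier (omega_power G)"
  by (auto simp: omega_topology_def omega_power_def)

lemma continuous_map_omega_coordinate:
  "continuous_map (omega_topology G) (discrete_topology (carrier G)) (\<lambda>x. x k)"
  unfolding omega_topology_def by (rule continuous_map_product_projection) simp

lemma finite_coordinate_image_compactin:
  "compactin (omega_topology G) K \<Longrightarrow> finite ((\<lambda>x. x k) ` K)"
  using image_compactin[OF _ continuous_map_omega_coordinate[of G k]]
  by (simp add: compactin_discrete_topology)

lemma continuous_map_omega_left_mult:
  assumes "group G" "w \<in> carrier (omega_power G)"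
  shows "continuous_map (omega_topology G) (omega_topology G) (\<lambda>x. w \<otimes>\<^bsub>omega_power G\<^esub> x)"
proof -
  have "continuous_map (omega_topology G) (discrete_topology (carrier G)) (\<lambda>x. w k \<otimes>\<^bsub>G\<^esub> x k)" for k
  proof -
    have "continuous_map (discrete_topology (carrier G)) (discrete_topology (carrier G)) ((\<otimes>\<^bsub>G\<^esub>) (w k))"
      using assms by (auto simp: omega_power_carrier intro: group.is_monoid monoid.m_closed)
    from continuous_map_compose[OF continuous_map_omega_coordinate this] show ?thesis
      by (simp add: o_def)
  qed
  then show ?thesis
    unfolding omega_power_mult
    by (subst (2) omega_topology_def) (simp add: continuous_map_componentwise_UNIV)
qed

lemma compactin_finite_left_translates:
  assumes "group G" "finite W" "W \<subseteq> carrier (omega_power G)" "compactin (omega_topology G) K"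
  shows "compactin (omega_topology G) (\<Union>w\<in>W. (\<lambda>x. w \<otimes>\<^bsub>omega_power G\<^esub> x) ` K)"
proof (rule compactin_Union)
  show "finite ((\<lambda>w. (\<lambda>x. w \<otimes>\<^bsub>omega_power G\<^esub> x) ` K) ` W)"
    using assms(2) by simp
next
  fix S assume "S \<in> (\<lambda>w. (\<lambda>x. w \<otimes>\<^bsub>omega_power G\<^esub> x) ` K) ` W"
  then obtain w where "w \<in> W" "S = (\<lambda>x. w \<otimes>\<^bsub>omega_power G\<^esub> x) ` K"
    by blast
  then show "compactin (omega_topology G) S"
    using assms(3) image_compactin[OF assms(4) continuous_map_omega_left_mult[OF assms(1)]] by blast
qed

definition omega_tail :: "('a, 'b) monoid_scheme \<Rightarrow> nat \<Rightarrow> (nat \<Rightarrow> 'a) set" where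
  "omega_tail G n = {x \<in> carrier (omega_power G). \<forall>i<n. x i = \<one>\<^bsub>G\<^esub>}"

lemma omega_tail_antimono: "m \<le> n \<Longrightarrow> omega_tail G n \<subseteq> omega_tail G m"
  by (auto simp: omega_tail_def)

lemma subgroup_omega_tail:
  assumes "group G"
  shows "subgroup (omega_tail G n) (omega_power G)"
proof -
  interpret group G by fact
  show ?thesis
    by (rule group.subgroupI[OF group_omega_power[OF assms]])
       (auto simp: omega_tail_def omega_power_carrier omega_power_inv[OF assms]
             intro!: exI[of _ "\<lambda>i. \<one>\<^bsub>G\<^esub>"])
qed

lemma closedin_omega_tail:
  assumes "group G"
  shows "closedin (omega_topology G) (omega_tail G n)"
proof (induction n)
  case 0
  show ?case by (simp add: omega_tail_def flip: topspace_omega_topology)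
next
  case (Suc n)
  have "omega_tail G (Suc n) = omega_tail G n \<inter> {x \<in> topspace (omega_topology G). x n \<in> {\<one>\<^bsub>G\<^esub>}}"
    by (auto simp: omega_tail_def less_Suc_eq)
  moreover have "closedin (omega_topology G) {x \<in> topspace (omega_topology G). x n \<in> {\<one>\<^bsub>G\<^esub>}}"
    using assms
    by (intro closedin_continuous_map_preimage[OF continuous_map_omega_coordinate]) (simp add: group.is_monoid monoid.one_closed)
  ultimately show ?case using Suc by (simp add: closedin_Int)
qed

lemma omega_tail_subset_openin:
  assumes "openin (omega_topology G) U" "(\<lambda>i. \<one>\<^bsub>G\<^esub>) \<in> U"
  shows "\<exists>N. \<forall>n\<ge>N. omega_tail G n \<subseteq> U"
proof -
  obtain V where V: "finite {i. V i \<noteq> carrier G}" "(\<lambda>i. \<one>\<^bsub>G\<^esub>) \<in> PiE UNIV V" "PiE UNIV V \<subseteq> U"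
    using assms unfolding omega_topology_def openin_product_topology_alt by force
  obtain N where N: "{i. V i \<noteq> carrier G} \<subseteq> {..<N}"
    using finite_nat_bounded[OF V(1)] by blast
  have "omega_tail G N \<subseteq> PiE UNIV V"
  proof
    fix x assume x: "x \<in> omega_tail G N"
    have "x i \<in> V i" for i
    proof (cases "V i = carrier G")
      case True
      then show ?thesis using x by (simp add: omega_tail_def omega_power_carrier)
    next
      case False
      then have "i < N" using N by blast
      then show ?thesis using x V(2) by (simp add: omega_tail_def PiE_iff)
    qed
    then show "x \<in> PiE UNIV V" by (simp add: PiE_iff)
  qed
  then show ?thesis
    using V(3) omega_tail_antimono[of N] by (meson order_trans)
qed

lemma omega_tail_inv_mult:
  assumes "group G" "w \<in> carrier (omega_power G)" "x \<in> carrier (omega_power G)"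
    and "\<forall>i<n. w i = x i"
  shows "inv\<^bsub>omega_power G\<^esub> w \<otimes>\<^bsub>omega_power G\<^esub> x \<in> omega_tail G n"
proof -
  interpret P: group "omega_power G" using group_omega_power[OF assms(1)] .
  have "(inv\<^bsub>omega_power G\<^esub> w \<otimes>\<^bsub>omega_power G\<^esub> x) i = \<one>\<^bsub>G\<^esub>" if "i < n" for i
    using assms that by (simp add: omega_power_inv omega_power_carrier group.l_inv)
  then show ?thesis
    using assms by (simp add: omega_tail_def del: omega_power_mult)
qed

lemma finitely_generated_coordinate_image:
  assumes "group G" and "compactly_generated_in (omega_power G) (omega_topology G) D"
  shows "finitely_generated_subgroup G ((\<lambda>x. x k) ` D)"
proof -
  interpret group_hom "omega_power G" G "\<lambda>x. x k"
    using group_hom_omega_coordinate[OF assms(1)] .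
  obtain K where K: "K \<subseteq> carrier (omega_power G)" "compactin (omega_topology G) K"
      "D = generate (omega_power G) K"
    using assms(2) unfolding compactly_generated_in_def by blast
  have "(\<lambda>x. x k) ` D = generate G ((\<lambda>x. x k) ` K)"
    using generate_img[OF K(1)] K(3) by simp
  moreover have "(\<lambda>x. x k) ` K \<subseteq> (\<lambda>x. x k) ` D"
    unfolding K(3) by (intro image_mono subsetI generate.incl)
  ultimately show ?thesis
    unfolding finitely_generated_subgroup_def
    by (intro exI[of _ "(\<lambda>x. x k) ` K"] conjI finite_coordinate_image_compactin[OF K(2)])
qed

lemma subgroup_omega_constants:
  assumes "group G" "subgroup H G"
  shows "subgroup ((\<lambda>h i. h) ` H) (omega_power G)"
proof (rule group.subgroupI[OF group_omega_power[OF assms(1)]])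
  have "H \<subseteq> carrier G" using assms(2) subgroup.subset by blast
  then show "(\<lambda>h i. h) ` H \<subseteq> carrier (omega_power G)"
    by (auto simp: omega_power_carrier)
  then show "inv\<^bsub>omega_power G\<^esub> a \<in> (\<lambda>h i. h) ` H" if "a \<in> (\<lambda>h i. h) ` H" for a
    using that assms by (auto simp: omega_power_inv subgroup.m_inv_closed)
  show "a \<otimes>\<^bsub>omega_power G\<^esub> b \<in> (\<lambda>h i. h) ` H" if "a \<in> (\<lambda>h i. h) ` H" "b \<in> (\<lambda>h i. h) ` H" for a b
    using that assms(2) by (auto simp: subgroup.m_closed)
  show "(\<lambda>h i. h) ` H \<noteq> {}"
    using assms(2) subgroup.one_closed by blast
qed

lemma finitely_generated_if_Ksigma_subgroups_compactly_generated:
  assumes G: "group G" and cG: "countable (carrier G)"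
    and L: "\<forall>D. subgroup D (omega_power G) \<and> Ksigma_in (omega_topology G) D
              \<longrightarrow> compactly_generated_in (omega_power G) (omega_topology G) D"
    and H: "subgroup H G"
  shows "finitely_generated_subgroup G H"
proof -
  define D where "D = (\<lambda>h i::nat. h) ` H"
  have "subgroup D (omega_power G)"
    unfolding D_def by (rule subgroup_omega_constants[OF G H])
  moreover have "Ksigma_in (omega_topology G) D"
  proof (rule Ksigma_in_countable)
    have "countable H"
      using countable_subset[OF subgroup.subset[OF H] cG] .
    then show "countable D"
      unfolding D_def by (rule countable_image)
    show "D \<subseteq> topspace (omega_topology G)"
      using \<open>subgroup D (omega_power G)\<close> subgroup.subset by auto
  qed
  ultimately have "finitely_generated_subgroup G ((\<lambda>x. x 0) ` D)"
    using L by (intro finitely_generated_coordinate_image[OF G]) blast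
  moreover have "(\<lambda>x. x 0) ` D = H"
    unfolding D_def image_image by simp
  ultimately show ?thesis by simp
qed

lemma ex_omega_tail_generators:
  assumes G: "group G" and fg: "\<forall>S. subgroup S G \<longrightarrow> finitely_generated_subgroup G S"
    and H: "subgroup H (omega_power G)"
  obtains M where "\<And>n. finite (M n)" "\<And>n. M n \<subseteq> H \<inter> omega_tail G n"
    "\<And>n. (\<lambda>x. x n) ` (H \<inter> omega_tail G n) = generate G ((\<lambda>x. x n) ` M n)"
proof -
  have "\<exists>M. finite M \<and> M \<subseteq> H \<inter> omega_tail G n \<and>
      (\<lambda>x. x n) ` (H \<inter> omega_tail G n) = generate G ((\<lambda>x. x n) ` M)" for n
  proof (rule finitely_generated_subgroup_image_lift)
    interpret group_hom "omega_power G" G "\<lambda>x. x n"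
      using group_hom_omega_coordinate[OF G] .
    have "subgroup ((\<lambda>x. x n) ` (H \<inter> omega_tail G n)) G"
      by (intro subgroup_img_is_subgroup subgroup_Int H subgroup_omega_tail G)
    then show "finitely_generated_subgroup G ((\<lambda>x. x n) ` (H \<inter> omega_tail G n))"
      using fg by blast
  qed
  then show ?thesis
    using that by metis
qed

lemma omega_prefix_agreement_step:
  assumes G: "group G" and H: "subgroup H (omega_power G)"
    and M: "M \<subseteq> H \<inter> omega_tail G n"
      "(\<lambda>x. x n) ` (H \<inter> omega_tail G n) = generate G ((\<lambda>x. x n) ` M)"
    and w: "w \<in> H" and x: "x \<in> H" and agree: "\<forall>i<n. w i = x i"
  shows "\<exists>u\<in>generate (omega_power G) M. \<forall>i\<le>n. (w \<otimes>\<^bsub>omega_power G\<^esub> u) i = x i"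
proof -
  interpret G: group G by fact
  interpret P: group "omega_power G" using group_omega_power[OF G] .
  interpret h: group_hom "omega_power G" G "\<lambda>x. x n" using group_hom_omega_coordinate[OF G] .
  have HP: "H \<subseteq> carrier (omega_power G)"
    using H subgroup.subset by blast
  define r where "r = inv\<^bsub>omega_power G\<^esub> w \<otimes>\<^bsub>omega_power G\<^esub> x"
  have "r \<in> H \<inter> omega_tail G n"
    using w x agree HP
    by (auto simp: r_def subgroup.m_inv_closed[OF H] subgroup.m_closed[OF H]
        intro: omega_tail_inv_mult[OF G] simp del: omega_power_mult)
  then have "r n \<in> (\<lambda>x. x n) ` generate (omega_power G) M"
    using M HP h.generate_img[of M] by blast
  then obtain u where u: "u \<in> generate (omega_power G) M" "u n = r n"
    by (metis imageE)
  \<comment> \<open>\<open>u\<close> lies in \<open>Z_n\<close>, so multiplying by it leaves the coordinates below \<open>n\<close> unchanged.\<close>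
  have "generate (omega_power G) M \<subseteq> omega_tail G n"
    using M(1) by (intro P.generate_subgroup_incl subgroup_omega_tail G) blast
  then have "u \<in> omega_tail G n"
    using u(1) by blast
  moreover have "w i \<in> carrier G" "x i \<in> carrier G" for i
    using w x HP by (auto simp: omega_power_carrier)
  moreover have "r n = inv\<^bsub>G\<^esub> w n \<otimes>\<^bsub>G\<^esub> x n"
    using w HP by (auto simp: r_def omega_power_inv[OF G])
  ultimately have "(w \<otimes>\<^bsub>omega_power G\<^esub> u) i = x i" if "i \<le> n" for i
    using that agree u(2) by (cases "i = n") (auto simp: omega_tail_def G.m_assoc[symmetric])
  then show ?thesis
    using u(1) by blast
qed

lemma omega_prefix_approximation:
  assumes G: "group G" and H: "subgroup H (omega_power G)"
    and M: "\<And>n. M n \<subseteq> H \<inter> omega_tail G n"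
      "\<And>n. (\<lambda>x. x n) ` (H \<inter> omega_tail G n) = generate G ((\<lambda>x. x n) ` M n)"
    and x: "x \<in> H"
  shows "\<exists>w\<in>generate (omega_power G) (\<Union>k<n. M k). \<forall>i<n. w i = x i"
proof (induction n)
  case 0
  show ?case using generate.one by blast
next
  case (Suc n)
  interpret P: group "omega_power G" using group_omega_power[OF G] .
  have MP: "(\<Union>k<Suc n. M k) \<subseteq> carrier (omega_power G)"
    using M(1) H subgroup.subset by blast
  obtain w where w: "w \<in> generate (omega_power G) (\<Union>k<n. M k)" "\<forall>i<n. w i = x i"
    using Suc by blast
  have "(\<Union>k<n. M k) \<subseteq> H"
    using M(1) by blast
  then have "w \<in> H"
    using P.generate_subgroup_incl[OF _ H] w(1) by blast
  then obtain u where u: "u \<in> generate (omega_power G) (M n)"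
      "\<forall>i\<le>n. (w \<otimes>\<^bsub>omega_power G\<^esub> u) i = x i"
    using omega_prefix_agreement_step[OF G H M(1,2) _ x w(2)] by blast
  have "(\<Union>k<Suc n. M k) = M n \<union> (\<Union>k<n. M k)"
    by (simp add: lessThan_Suc)
  then have "generate (omega_power G) (\<Union>k<n. M k) \<subseteq> generate (omega_power G) (\<Union>k<Suc n. M k)"
    "generate (omega_power G) (M n) \<subseteq> generate (omega_power G) (\<Union>k<Suc n. M k)"
    by (simp_all add: P.mono_generate)
  then have "w \<otimes>\<^bsub>omega_power G\<^esub> u \<in> generate (omega_power G) (\<Union>k<Suc n. M k)"
    using w(1) u(1) by (intro subgroup.m_closed[OF P.generate_is_subgroup[OF MP]]) (rule subsetD; assumption)+
  then show ?case
    using u(2) less_Suc_eq_le by blast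
qed

lemma finite_prefix_representatives:
  assumes K: "compactin (omega_topology G) K" and A: "\<forall>x\<in>K. \<exists>w\<in>A. \<forall>i<n. w i = x i"
  shows "\<exists>W. finite W \<and> W \<subseteq> A \<and> (\<forall>x\<in>K. \<exists>w\<in>W. \<forall>i<n. w i = x i)"
proof -
  define V where "V = (\<lambda>x. restrict x {..<n}) ` K"
  have "V \<subseteq> (\<Pi>\<^sub>E i\<in>{..<n}. (\<lambda>x. x i) ` K)"
    unfolding V_def by (intro image_subsetI) (simp only: restrict_PiE_iff, blast)
  then have "finite V"
    by (rule finite_subset) (intro finite_PiE finite_coordinate_image_compactin[OF K] finite_lessThan)
  define rep where "rep v = (SOME w. w \<in> A \<and> (\<forall>i<n. w i = v i))" for v
  have rep: "rep (restrict x {..<n}) \<in> A \<and> (\<forall>i<n. rep (restrict x {..<n}) i = x i)" if "x \<in> K" for x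
  proof -
    have "\<exists>w. w \<in> A \<and> (\<forall>i<n. w i = restrict x {..<n} i)"
      using A that by auto
    then show ?thesis
      unfolding rep_def by (rule someI_ex[THEN conj_forward]) simp_all
  qed
  show ?thesis
  proof (intro exI conjI)
    show "finite (rep ` V)"
      using \<open>finite V\<close> by simp
    show "rep ` V \<subseteq> A" "\<forall>x\<in>K. \<exists>w\<in>rep ` V. \<forall>i<n. w i = x i"
      using rep unfolding V_def by blast+
  qed
qed

lemma finite_omega_prefix_approximants:
  assumes G: "group G" and H: "subgroup H (omega_power G)"
    and M: "\<And>n. M n \<subseteq> H \<inter> omega_tail G n"
      "\<And>n. (\<lambda>x. x n) ` (H \<inter> omega_tail G n) = generate G ((\<lambda>x. x n) ` M n)"
    and K: "compactin (omega_topology G) K" "K \<subseteq> H"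
  shows "\<exists>W. finite W \<and> W \<subseteq> generate (omega_power G) (\<Union>k<n. M k) \<and>
      (\<forall>x\<in>K. \<exists>w\<in>W. \<forall>i<n. w i = x i)"
proof (rule finite_prefix_representatives[OF K(1)])
  show "\<forall>x\<in>K. \<exists>w\<in>generate (omega_power G) (\<Union>k<n. M k). \<forall>i<n. w i = x i"
  proof
    fix x assume "x \<in> K"
    then have "x \<in> H"
      using K(2) by blast
    then show "\<exists>w\<in>generate (omega_power G) (\<Union>k<n. M k). \<forall>i<n. w i = x i"
      by (rule omega_prefix_approximation[OF G H M])
  qed
qed

lemma compactly_generated_by_omega_tail_pieces:
  assumes G: "group G" and H: "subgroup H (omega_power G)"
    and C: "\<And>n. compactin (omega_topology G) (C n)" "\<And>n. C n \<subseteq> H \<inter> omega_tail G n"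
    and gen: "H \<subseteq> generate (omega_power G) (\<Union>n. C n)"
  shows "compactly_generated_in (omega_power G) (omega_topology G) H"
proof -
  interpret P: group "omega_power G" using group_omega_power[OF G] .
  define K where "K = insert \<one>\<^bsub>omega_power G\<^esub> (\<Union>n. C n)"
  have "compactin (omega_topology G) K"
    unfolding K_def omega_power_one
  proof (rule compactin_insert_Union_convergent[OF _ C(1)])
    show "(\<lambda>i. \<one>\<^bsub>G\<^esub>) \<in> topspace (omega_topology G)"
      using P.one_closed by simp
    show "\<exists>N. \<forall>n\<ge>N. C n \<subseteq> U"
      if U: "openin (omega_topology G) U" "(\<lambda>i. \<one>\<^bsub>G\<^esub>) \<in> U" for U
    proof -
      obtain N where "\<forall>n\<ge>N. omega_tail G n \<subseteq> U"
        using omega_tail_subset_openin[OF U] by blast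
      then show ?thesis
        using C(2) by (meson le_inf_iff order_trans)
    qed
  qed
  moreover have "K \<subseteq> H"
    using C(2) subgroup.one_closed[OF H] by (auto simp: K_def simp del: omega_power_one)
  moreover have "generate (omega_power G) (\<Union>n. C n) \<subseteq> generate (omega_power G) K"
    by (rule P.mono_generate) (auto simp: K_def)
  then have "H = generate (omega_power G) K"
    using gen P.generate_subgroup_incl[OF \<open>K \<subseteq> H\<close> H] by blast
  ultimately show ?thesis
    unfolding compactly_generated_in_def using subgroup.subset[OF H] by blast
qed

lemma omega_tail_correction:
  assumes G: "group G" and H: "subgroup H (omega_power G)"
    and K: "compactin (omega_topology G) K" "K \<subseteq> H"
    and W: "finite W" "W \<subseteq> H" "\<forall>x\<in>K. \<exists>w\<in>W. \<forall>i<n. w i = x i"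
  obtains L where "compactin (omega_topology G) L" "L \<subseteq> H \<inter> omega_tail G n"
    "K \<subseteq> generate (omega_power G) (W \<union> L)"
proof -
  interpret P: group "omega_power G" using group_omega_power[OF G] .
  have WP: "W \<subseteq> carrier (omega_power G)" and KP: "K \<subseteq> carrier (omega_power G)"
    using W(2) K(2) H subgroup.subset by blast+
  define L where "L = omega_tail G n \<inter>
      (\<Union>w\<in>m_inv (omega_power G) ` W. (\<lambda>x. w \<otimes>\<^bsub>omega_power G\<^esub> x) ` K)"
  show ?thesis
  proof (rule that[of L])
    have "finite (m_inv (omega_power G) ` W)" "m_inv (omega_power G) ` W \<subseteq> carrier (omega_power G)"
      using W(1) WP by (auto intro!: P.inv_closed)
    then show "compactin (omega_topology G) L"
      unfolding L_def
      by (rule closed_Int_compactin[OF closedin_omega_tail[OF G] compactin_finite_left_translates[OF G _ _ K(1)]])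
    have "L \<subseteq> H"
    proof
      fix y assume "y \<in> L"
      then obtain w h where wh: "w \<in> W" "h \<in> K" "y = inv\<^bsub>omega_power G\<^esub> w \<otimes>\<^bsub>omega_power G\<^esub> h"
        unfolding L_def by blast
      then have "inv\<^bsub>omega_power G\<^esub> w \<in> H"
        using W(2) subgroup.m_inv_closed[OF H] by blast
      then show "y \<in> H"
        using wh(2,3) K(2) subgroup.m_closed[OF H] by blast
    qed
    then show "L \<subseteq> H \<inter> omega_tail G n"
      unfolding L_def by blast
    show "K \<subseteq> generate (omega_power G) (W \<union> L)"
    proof
      fix x assume x: "x \<in> K"
      then obtain w where w: "w \<in> W" "\<forall>i<n. w i = x i"
        using W(3) by blast
      have wP: "w \<in> carrier (omega_power G)" and xP: "x \<in> carrier (omega_power G)"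
        using w(1) WP x KP by blast+
      define r where "r = inv\<^bsub>omega_power G\<^esub> w \<otimes>\<^bsub>omega_power G\<^esub> x"
      have "r \<in> (\<Union>w'\<in>m_inv (omega_power G) ` W. (\<lambda>y. w' \<otimes>\<^bsub>omega_power G\<^esub> y) ` K)"
        unfolding r_def using w(1) x by blast
      moreover have "r \<in> omega_tail G n"
        unfolding r_def by (rule omega_tail_inv_mult[OF G wP xP w(2)])
      ultimately have "r \<in> L"
        unfolding L_def by blast
      then have "w \<in> generate (omega_power G) (W \<union> L)" "r \<in> generate (omega_power G) (W \<union> L)"
        using w(1) by (auto intro: generate.incl)
      then have "w \<otimes>\<^bsub>omega_power G\<^esub> r \<in> generate (omega_power G) (W \<union> L)"
        by (rule generate.eng)
      moreover have "w \<otimes>\<^bsub>omega_power G\<^esub> r = x"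
        unfolding r_def using wP xP by (simp add: P.m_assoc[symmetric] del: omega_power_mult omega_power_one)
      ultimately show "x \<in> generate (omega_power G) (W \<union> L)"
        by simp
    qed
  qed
qed

lemma compactly_generated_if_subgroups_finitely_generated:
  assumes G: "group G" and fg: "\<forall>S. subgroup S G \<longrightarrow> finitely_generated_subgroup G S"
    and H: "subgroup H (omega_power G)" and "Ksigma_in (omega_topology G) H"
  shows "compactly_generated_in (omega_power G) (omega_topology G) H"
proof -
  interpret P: group "omega_power G" using group_omega_power[OF G] .
  have HP: "H \<subseteq> carrier (omega_power G)"
    using H subgroup.subset by blast
  obtain K :: "nat \<Rightarrow> _" where K: "\<And>n. compactin (omega_topology G) (K n)" "H = (\<Union>n. K n)"
    using Ksigma_in_imp_compactin_sequence[OF \<open>Ksigma_in (omega_topology G) H\<close>] by blast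
  have KH: "K n \<subseteq> H" for n
    unfolding K(2) by (rule UN_upper) simp
  obtain M where M: "\<And>n. finite (M n)" "\<And>n. M n \<subseteq> H \<inter> omega_tail G n"
      "\<And>n. (\<lambda>x. x n) ` (H \<inter> omega_tail G n) = generate G ((\<lambda>x. x n) ` M n)"
    using ex_omega_tail_generators[OF G fg H] by blast
  have "\<exists>W. finite W \<and> W \<subseteq> generate (omega_power G) (\<Union>k<n. M k) \<and>
      (\<forall>x\<in>K n. \<exists>w\<in>W. \<forall>i<n. w i = x i)" for n
    by (rule finite_omega_prefix_approximants[OF G H M(2,3) K(1) KH])
  then obtain W where W: "\<And>n. finite (W n)" "\<And>n. W n \<subseteq> generate (omega_power G) (\<Union>k<n. M k)"
      "\<And>n. \<forall>x\<in>K n. \<exists>w\<in>W n. \<forall>i<n. w i = x i"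
    by metis
  have "generate (omega_power G) (\<Union>k<n. M k) \<subseteq> H" for n
    using M(2) by (intro P.generate_subgroup_incl[OF _ H]) blast
  then have "\<exists>L. compactin (omega_topology G) L \<and> L \<subseteq> H \<inter> omega_tail G n \<and>
      K n \<subseteq> generate (omega_power G) (W n \<union> L)" for n
    using omega_tail_correction[OF G H K(1) KH W(1) _ W(3)] W(2) by (metis subset_trans)
  then obtain L where L: "\<And>n. compactin (omega_topology G) (L n)" "\<And>n. L n \<subseteq> H \<inter> omega_tail G n"
      "\<And>n. K n \<subseteq> generate (omega_power G) (W n \<union> L n)"
    by metis
  show ?thesis
  proof (rule compactly_generated_by_omega_tail_pieces[OF G H])
    show "compactin (omega_topology G) (M n \<union> L n)" for n
      using M(1)[of n] M(2)[of n] HP by (intro compactin_Un finite_imp_compactin L(1)) auto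
    show "M n \<union> L n \<subseteq> H \<inter> omega_tail G n" for n
      using M(2)[of n] L(2)[of n] by blast
    have CP: "(\<Union>n. M n \<union> L n) \<subseteq> carrier (omega_power G)"
      using M(2) L(2) HP by blast
    show "H \<subseteq> generate (omega_power G) (\<Union>n. M n \<union> L n)"
    proof
      fix x assume "x \<in> H"
      then obtain n where x: "x \<in> K n"
        unfolding K(2) by blast
      have "generate (omega_power G) (\<Union>k<n. M k) \<subseteq> generate (omega_power G) (\<Union>n. M n \<union> L n)"
        by (intro P.mono_generate) blast
      then have "W n \<union> L n \<subseteq> generate (omega_power G) (\<Union>n. M n \<union> L n)"
        using W(2)[of n] by (blast intro: generate.incl)
      then have "generate (omega_power G) (W n \<union> L n) \<subseteq> generate (omega_power G) (\<Union>n. M n \<union> L n)"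
        by (rule P.generate_subgroup_incl[OF _ P.generate_is_subgroup[OF CP]])
      then show "x \<in> generate (omega_power G) (\<Union>n. M n \<union> L n)"
        using L(3)[of n] x by blast
    qed
  qed
qed

theorem mainTheorem4:
  fixes G :: "('a, 'b) monoid_scheme"
  assumes "group G"
    and "countable (carrier G)"
  shows "(\<forall>H. subgroup H (omega_power G) \<and> Ksigma_in (omega_topology G) H
              \<longrightarrow> compactly_generated_in (omega_power G) (omega_topology G) H)
         \<longleftrightarrow> (\<forall>H. subgroup H G \<longrightarrow> finitely_generated_subgroup G H)"
  using finitely_generated_if_Ksigma_subgroups_compactly_generated[OF assms]
    compactly_generated_if_subgroups_finitely_generated[OF assms(1)]
  by blast

end
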